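(* Let $f:2^{[n]}\to\mathbb{Z}$ be an integer-valued submodular function with $f(\emptyset)=0$ and $|f(S)|\le M$ for all $S\subseteq[n]$. Then for every $x\in[0,1]^n$, the Lovász subgradient $g(x)$ has at most $3M$ nonzero entries.
   Context: Notation: $[n]=\{1,\dots,n\}$. For a permutation $P=(P_1,\dots,P_n)$ of $[n]$, write $P[j]=\{P_1,\dots,P_j\}$ for $0\le j\le n$ (so $P[0]=\emptyset$). For $x\in\mathbb{R}^n$, the permutation $P_x$ consistent with $x$ is the permutation with $x_{P_1}\ge x_{P_2}\ge\dots\ge x_{P_n}$, ties broken lexicographically. The Lovász subgradient at $x$ is $g(x)\in\mathbb{R}^n$ with $g(x)_{P_k}=f(P[k])-f(P[k-1])$ for $k\in[n]$, where $P=P_x$. *)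

theory Defs
  imports Complex_Main
begin

definition consistent_perm :: "nat \<Rightarrow> (nat \<Rightarrow> real) \<Rightarrow> (nat \<Rightarrow> nat) \<Rightarrow> bool" where
  "consistent_perm n x P \<longleftrightarrow>
     bij_betw P {1..n} {1..n} \<and> (\<forall>k. k \<notin> {1..n} \<longrightarrow> P k = k) \<and>
     (\<forall>k\<in>{1..n}. \<forall>l\<in>{1..n}. k < l \<longrightarrow>
        (x (P k) > x (P l) \<or> (x (P k) = x (P l) \<and> P k < P l)))"

definition perm_of :: "nat \<Rightarrow> (nat \<Rightarrow> real) \<Rightarrow> (nat \<Rightarrow> nat)" where
  "perm_of n x = (THE P. consistent_perm n x P)"

definition lovasz_subgrad :: "nat \<Rightarrow> (nat set \<Rightarrow> int) \<Rightarrow> (nat \<Rightarrow> real) \<Rightarrow> nat \<Rightarrow> int" where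
  "lovasz_subgrad n f x i =
     (let P = perm_of n x; k = (THE k. k \<in> {1..n} \<and> P k = i)
      in f (P ` {1..k}) - f (P ` {1..k - 1}))"

definition submodular_on :: "nat set \<Rightarrow> (nat set \<Rightarrow> int) \<Rightarrow> bool" where
  "submodular_on V f \<longleftrightarrow>
     (\<forall>S T. S \<subseteq> V \<longrightarrow> T \<subseteq> V \<longrightarrow> f (S \<union> T) + f (S \<inter> T) \<le> f S + f T)"

end

theory Submission
  imports Defs
begin

text \<open>Along the chain \<open>P[0] \<subset> \<dots> \<subset> P[n]\<close> the increments \<open>d\<^sub>k = f(P[k]) - f(P[k-1])\<close>
  telescope to \<open>f(P[n]) \<ge> -M\<close>. By submodularity (diminishing returns) the positive increments
  sum to at most \<open>f(B) \<le> M\<close>, where \<open>B\<close> collects the elements with a positive increment. As the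
  increments are integers, the number of nonzero ones is at most
  \<open>\<Sum>|d\<^sub>k| = 2 \<Sum>max d\<^sub>k 0 - \<Sum>d\<^sub>k \<le> 2M + M\<close>.\<close>

definition precedes :: "(nat \<Rightarrow> real) \<Rightarrow> nat \<Rightarrow> nat \<Rightarrow> bool" where
  "precedes x i j \<longleftrightarrow> x i > x j \<or> (x i = x j \<and> i < j)"

definition rank :: "nat \<Rightarrow> (nat \<Rightarrow> real) \<Rightarrow> nat \<Rightarrow> nat" where
  "rank n x i = card {j \<in> {1..n}. precedes x j i} + 1"

definition marginal :: "(nat \<Rightarrow> nat) \<Rightarrow> (nat set \<Rightarrow> int) \<Rightarrow> nat \<Rightarrow> int" where
  "marginal P f k = f (P ` {1..k}) - f (P ` {1..k - 1})"

lemma precedes_irrefl: "\<not> precedes x i i"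
  by (auto simp: precedes_def)

lemma precedes_trans: "precedes x i j \<Longrightarrow> precedes x j l \<Longrightarrow> precedes x i l"
  by (auto simp: precedes_def)

lemma precedes_asym: "precedes x i j \<Longrightarrow> \<not> precedes x j i"
  by (auto simp: precedes_def)

lemma precedes_total: "i \<noteq> j \<Longrightarrow> precedes x i j \<or> precedes x j i"
  by (auto simp: precedes_def)

lemma rank_in_range:
  assumes "i \<in> {1..n}"
  shows "rank n x i \<in> {1..n}"
proof -
  have "{j \<in> {1..n}. precedes x j i} \<subseteq> {1..n} - {i}"
    using precedes_irrefl by auto
  then have "card {j \<in> {1..n}. precedes x j i} \<le> n - 1"
    using card_mono[of "{1..n} - {i}"] assms by fastforce
  then show ?thesis
    using assms by (auto simp: rank_def)
qed

lemma rank_strict_mono: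
  assumes "precedes x i j" "i \<in> {1..n}"
  shows "rank n x i < rank n x j"
proof -
  have "{l \<in> {1..n}. precedes x l i} \<subset> {l \<in> {1..n}. precedes x l j}"
    using assms precedes_trans[of x _ i j] precedes_irrefl[of x i] by auto
  then show ?thesis
    unfolding rank_def by (simp add: psubset_card_mono)
qed

lemma bij_betw_rank: "bij_betw (rank n x) {1..n} {1..n}"
proof -
  have inj: "inj_on (rank n x) {1..n}"
    by (rule inj_onI) (metis precedes_total rank_strict_mono less_irrefl)
  then have "card (rank n x ` {1..n}) = card {1..n}"
    by (rule card_image)
  moreover have "rank n x ` {1..n} \<subseteq> {1..n}"
    using rank_in_range by blast
  ultimately show ?thesis
    using inj card_subset_eq[of "{1..n}"] by (simp add: bij_betw_def)
qed

lemma consistent_perm_precedes_iff: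
  assumes "consistent_perm n x P" "k \<in> {1..n}" "l \<in> {1..n}"
  shows "precedes x (P l) (P k) \<longleftrightarrow> l < k"
proof -
  have ordered: "precedes x (P a) (P b)" if "a \<in> {1..n}" "b \<in> {1..n}" "a < b" for a b
    using assms(1) that unfolding consistent_perm_def precedes_def by blast
  show ?thesis
    by (metis assms(2,3) linorder_neqE_nat ordered precedes_asym precedes_irrefl)
qed

lemma rank_consistent_perm:
  assumes P: "consistent_perm n x P" and k: "k \<in> {1..n}"
  shows "rank n x (P k) = k"
proof -
  have bij: "bij_betw P {1..n} {1..n}"
    using P by (simp add: consistent_perm_def)
  have "{j \<in> {1..n}. precedes x j (P k)} = {j \<in> P ` {1..n}. precedes x j (P k)}"
    using bij by (simp add: bij_betw_def)
  also have "\<dots> = P ` {l \<in> {1..n}. precedes x (P l) (P k)}"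
    by auto
  also have "{l \<in> {1..n}. precedes x (P l) (P k)} = {l \<in> {1..n}. l < k}"
    using consistent_perm_precedes_iff[OF P k] by auto
  finally have "{j \<in> {1..n}. precedes x j (P k)} = P ` {l \<in> {1..n}. l < k}" .
  moreover have "inj_on P {l \<in> {1..n}. l < k}"
    using bij by (auto simp: bij_betw_def intro: inj_on_subset)
  moreover have "{l \<in> {1..n}. l < k} = {1..k - 1}"
    using k by auto
  ultimately show ?thesis
    using k by (simp add: rank_def card_image)
qed

lemma ex1_consistent_perm: "\<exists>!P. consistent_perm n x P"
proof
  define P where "P k = (if k \<in> {1..n} then inv_into {1..n} (rank n x) k else k)" for k
  have "bij_betw (inv_into {1..n} (rank n x)) {1..n} {1..n}"
    using bij_betw_rank by (rule bij_betw_inv_into)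
  then have bij: "bij_betw P {1..n} {1..n}"
    by (rule bij_betw_cong[THEN iffD1, rotated]) (simp add: P_def)
  have rank_P: "rank n x (P k) = k" if "k \<in> {1..n}" for k
    using that bij_betw_inv_into_right[OF bij_betw_rank] by (simp add: P_def)
  show "consistent_perm n x P"
    unfolding consistent_perm_def
  proof (intro conjI ballI allI impI)
    show "bij_betw P {1..n} {1..n}"
      by (rule bij)
  next
    fix k :: nat assume "k \<notin> {1..n}"
    then show "P k = k"
      unfolding P_def by (rule if_not_P)
  next
    fix k l assume kl: "k \<in> {1..n}" "l \<in> {1..n}" "k < l"
    then have "P k \<noteq> P l"
      using rank_P[of k] rank_P[of l] by auto
    moreover have "\<not> precedes x (P l) (P k)"
    proof
      assume "precedes x (P l) (P k)"
      then have "rank n x (P l) < rank n x (P k)"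
        using bij_betw_apply[OF bij kl(2)] by (rule rank_strict_mono)
      then show False
        using kl rank_P by simp
    qed
    ultimately have "precedes x (P k) (P l)"
      using precedes_total by blast
    then show "x (P k) > x (P l) \<or> (x (P k) = x (P l) \<and> P k < P l)"
      by (simp add: precedes_def)
  qed
  fix Q assume Q: "consistent_perm n x Q"
  show "Q = P"
  proof
    fix k
    show "Q k = P k"
    proof (cases "k \<in> {1..n}")
      case True
      have "Q k \<in> {1..n}" "P k \<in> {1..n}"
        using Q True bij_betw_apply[OF bij True] by (auto simp: consistent_perm_def bij_betw_def)
      moreover have "rank n x (Q k) = rank n x (P k)"
        using rank_consistent_perm[OF Q True] rank_P[OF True] by simp
      ultimately show ?thesis
        using inj_onD[OF bij_betw_imp_inj_on[OF bij_betw_rank]] by blast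
    next
      case False
      then have "Q k = k"
        using Q unfolding consistent_perm_def by blast
      moreover have "P k = k"
        using False unfolding P_def by (rule if_not_P)
      ultimately show ?thesis
        by simp
    qed
  qed
qed

lemma consistent_perm_perm_of: "consistent_perm n x (perm_of n x)"
  unfolding perm_of_def by (rule theI'[OF ex1_consistent_perm])

lemma lovasz_subgrad_perm_of:
  assumes "k \<in> {1..n}"
  shows "lovasz_subgrad n f x (perm_of n x k) = marginal (perm_of n x) f k"
proof -
  have "inj_on (perm_of n x) {1..n}"
    using consistent_perm_perm_of by (simp add: consistent_perm_def bij_betw_def)
  then have "(THE l. l \<in> {1..n} \<and> perm_of n x l = perm_of n x k) = k"
    using assms by (blast intro: the_equality dest: inj_onD)
  then show ?thesis
    unfolding lovasz_subgrad_def marginal_def Let_def by (rule arg_cong)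
qed

lemma submodular_on_diminishing_returns:
  assumes "submodular_on V f" "S \<subseteq> T" "T \<subseteq> V" "e \<in> V" "e \<notin> T"
  shows "f (insert e T) - f T \<le> f (insert e S) - f S"
proof -
  have "insert e S \<subseteq> V"
    using assms(2,3,4) by blast
  then have "f (insert e S \<union> T) + f (insert e S \<inter> T) \<le> f (insert e S) + f T"
    using assms(1,3) unfolding submodular_on_def by blast
  moreover have "insert e S \<union> T = insert e T" "insert e S \<inter> T = S"
    using assms(2,5) by auto
  ultimately show ?thesis
    by simp
qed

lemma image_atLeastAtMost_Suc: "P ` {1..Suc m} = insert (P (Suc m)) (P ` {1..m})"
  by (simp add: atLeastAtMostSuc_conv)

lemma sum_marginal:
  assumes "f {} = 0"
  shows "(\<Sum>k = 1..m. marginal P f k) = f (P ` {1..m})"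
  using assms by (induction m) (simp_all add: marginal_def)

lemma sum_pos_marginal_le:
  assumes sub: "submodular_on V f" and f0: "f {} = 0"
    and inj: "inj_on P {1..m}" and chain: "P ` {1..m} \<subseteq> V"
  shows "(\<Sum>k = 1..m. max (marginal P f k) 0) \<le> f (P ` {k \<in> {1..m}. marginal P f k > 0})"
  using inj chain
proof (induction m)
  case 0
  then show ?case using f0 by simp
next
  case (Suc m)
  let ?B = "P ` {k \<in> {1..m}. marginal P f k > 0}" and ?e = "P (Suc m)"
  have "inj_on P {1..m}" "P ` {1..m} \<subseteq> V"
    using Suc.prems by (auto intro: inj_on_subset)
  then have IH: "(\<Sum>k = 1..m. max (marginal P f k) 0) \<le> f ?B"
    by (rule Suc.IH)
  show ?case
  proof (cases "marginal P f (Suc m) > 0")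
    case True
    have "?e \<notin> P ` {1..m}"
      using inj_onD[OF Suc.prems(1)] by fastforce
    then have "f (insert ?e (P ` {1..m})) - f (P ` {1..m}) \<le> f (insert ?e ?B) - f ?B"
      using Suc.prems(2) by (intro submodular_on_diminishing_returns[OF sub]) auto
    then have "marginal P f (Suc m) \<le> f (insert ?e ?B) - f ?B"
      by (simp only: marginal_def image_atLeastAtMost_Suc diff_Suc_1)
    moreover have "P ` {k \<in> {1..Suc m}. marginal P f k > 0} = insert ?e ?B"
      using True by (auto simp: le_Suc_eq)
    ultimately show ?thesis
      using IH True by simp
  next
    case False
    then have "P ` {k \<in> {1..Suc m}. marginal P f k > 0} = ?B"
      by (auto simp: le_Suc_eq)
    then show ?thesis
      using IH False by simp
  qed
qed

lemma card_nonzero_marginal_le: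
  assumes sub: "submodular_on V f" and f0: "f {} = 0"
    and inj: "inj_on P {1..n}" and chain: "P ` {1..n} \<subseteq> V"
  shows "int (card {k \<in> {1..n}. marginal P f k \<noteq> 0})
           \<le> 2 * f (P ` {k \<in> {1..n}. marginal P f k > 0}) - f (P ` {1..n})"
proof -
  let ?d = "marginal P f"
  have "int (card {k \<in> {1..n}. ?d k \<noteq> 0}) = (\<Sum>k | k \<in> {1..n} \<and> ?d k \<noteq> 0. 1)"
    by simp
  also have "\<dots> \<le> (\<Sum>k | k \<in> {1..n} \<and> ?d k \<noteq> 0. \<bar>?d k\<bar>)"
    by (rule sum_mono) auto
  also have "\<dots> \<le> (\<Sum>k = 1..n. \<bar>?d k\<bar>)"
    by (rule sum_mono2) auto
  also have "\<dots> = (\<Sum>k = 1..n. 2 * max (?d k) 0 - ?d k)"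
    by (rule sum.cong) auto
  also have "\<dots> = 2 * (\<Sum>k = 1..n. max (?d k) 0) - (\<Sum>k = 1..n. ?d k)"
    by (simp add: sum_subtractf sum_distrib_left)
  also have "\<dots> \<le> 2 * f (P ` {k \<in> {1..n}. ?d k > 0}) - f (P ` {1..n})"
    using sum_pos_marginal_le[OF assms] sum_marginal[of f, OF f0] by simp
  finally show ?thesis .
qed

lemma card_lovasz_subgrad_support:
  "card {i \<in> {1..n}. lovasz_subgrad n f x i \<noteq> 0}
     = card {k \<in> {1..n}. marginal (perm_of n x) f k \<noteq> 0}"
proof -
  let ?P = "perm_of n x" and ?K = "{k \<in> {1..n}. marginal (perm_of n x) f k \<noteq> 0}"
  have bij: "bij_betw ?P {1..n} {1..n}"
    using consistent_perm_perm_of by (simp add: consistent_perm_def)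
  then have img: "?P ` {1..n} = {1..n}"
    by (simp add: bij_betw_def)
  have "{i \<in> {1..n}. lovasz_subgrad n f x i \<noteq> 0}
        = {i \<in> ?P ` {1..n}. lovasz_subgrad n f x i \<noteq> 0}"
    by (subst img) (rule refl)
  also have "\<dots> = ?P ` {k \<in> {1..n}. lovasz_subgrad n f x (?P k) \<noteq> 0}"
    by blast
  also have "\<dots> = ?P ` ?K"
    by (intro arg_cong[where f = "image ?P"] Collect_cong) (auto simp: lovasz_subgrad_perm_of)
  finally have "{i \<in> {1..n}. lovasz_subgrad n f x i \<noteq> 0} = ?P ` ?K" .
  moreover have "inj_on ?P ?K"
    using bij by (auto simp: bij_betw_def intro: inj_on_subset)
  ultimately show ?thesis
    by (simp add: card_image)
qed

theorem lemma3p6: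
  fixes n :: nat and f :: "nat set \<Rightarrow> int" and M :: real and x :: "nat \<Rightarrow> real"
  assumes "submodular_on {1..n} f"
    and "f {} = 0"
    and "\<forall>S. S \<subseteq> {1..n} \<longrightarrow> \<bar>real_of_int (f S)\<bar> \<le> M"
    and "\<forall>i\<in>{1..n}. 0 \<le> x i \<and> x i \<le> 1"
  shows "real (card {i \<in> {1..n}. lovasz_subgrad n f x i \<noteq> 0}) \<le> 3 * M"
proof -
  define P where "P = perm_of n x"
  have "bij_betw P {1..n} {1..n}"
    using consistent_perm_perm_of by (simp add: P_def consistent_perm_def)
  then have inj: "inj_on P {1..n}" and img: "P ` {1..n} = {1..n}"
    by (simp_all add: bij_betw_def)
  let ?K = "{k \<in> {1..n}. marginal P f k \<noteq> 0}" and ?B = "P ` {k \<in> {1..n}. marginal P f k > 0}"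
  have "int (card ?K) \<le> 2 * f ?B - f (P ` {1..n})"
    using card_nonzero_marginal_le[OF assms(1,2) inj] img by simp
  then have "real_of_int (int (card ?K)) \<le> real_of_int (2 * f ?B - f (P ` {1..n}))"
    by (simp only: of_int_le_iff)
  then have "real (card ?K) \<le> 2 * real_of_int (f ?B) - real_of_int (f (P ` {1..n}))"
    by simp
  moreover have "?B \<subseteq> {1..n}"
    using img by blast
  then have "\<bar>real_of_int (f ?B)\<bar> \<le> M" "\<bar>real_of_int (f (P ` {1..n}))\<bar> \<le> M"
    using assms(3) img by simp_all
  ultimately show ?thesis
    using card_lovasz_subgrad_support[of n f x] by (simp add: P_def)
qed

end
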